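(* Let $n$ be a positive integer and let $\mathbb{F}$ be a field with $\operatorname{char}(\mathbb{F})\neq 2$ and $|\mathbb{F}|\geq n^2+1$. Let $\Sigma_n$ denote the set of all $n\times n$ symmetric matrices over $\mathbb{F}$. If $a,b\in\Sigma_n$ satisfy $\det(a+x)=\det(b+x)$ for all $x\in\Sigma_n$, then $a=b$. *)

theory Defs
  imports "HOL-Analysis.Analysis"
begin

end

theory Submission
  imports Defs
begin

text \<open>Put \<open>c = b - a\<close>. Taking \<open>x = D - a\<close> for diagonal \<open>D\<close> gives
  \<open>det (c + D) = det D\<close> for every diagonal \<open>D\<close>. Expanding the rows of \<open>c + D\<close> one at a time by
  multilinearity, this identity forces every principal minor of \<open>c\<close> to vanish. The \<open>1 \<times> 1\<close>
  minors give \<open>c\<^sub>i\<^sub>i = 0\<close>, and then the \<open>2 \<times> 2\<close> minors of the symmetric matrix \<open>c\<close> give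
  \<open>c\<^sub>i\<^sub>j\<^sup>2 = 0\<close>. No polynomial identity argument is needed.\<close>

definition unit_rows_on :: "'n set \<Rightarrow> 'a::comm_ring_1^'n^'n \<Rightarrow> 'a^'n^'n" where
  "unit_rows_on S A = (\<chi> k. if k \<in> S then axis k 1 else A$k)"

definition diag_mat :: "('n \<Rightarrow> 'a::zero) \<Rightarrow> 'a^'n^'n" where
  "diag_mat d = (\<chi> i j. if i = j then d i else 0)"

lemma det_diag_mat [simp]: "det (diag_mat d :: 'a::comm_ring_1^'n^'n) = prod d UNIV"
  unfolding diag_mat_def by (subst det_diagonal) auto

lemma det_unit_rows_on:
  fixes A :: "'a::comm_ring_1^'n^'n"
  shows "det (unit_rows_on S A)
    = (\<Sum>p\<in>{p. p permutes -S}. of_int (sign p) * (\<Prod>k\<in>-S. A$k$p k))"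
  unfolding det_def
proof (rule sum.mono_neutral_cong_right)
  show "finite {p. p permutes (UNIV::'n set)}"
    by (simp add: finite_permutations)
  show "{p. p permutes -S} \<subseteq> {p. p permutes (UNIV::'n set)}"
    by (auto intro: permutes_subset)
  show "\<forall>p\<in>{p. p permutes UNIV} - {p. p permutes -S}.
      of_int (sign p) * (\<Prod>i\<in>UNIV. unit_rows_on S A $ i $ p i) = 0"
  proof
    fix p assume p: "p \<in> {p. p permutes UNIV} - {p. p permutes -S}"
    then obtain k where k: "k \<in> S" "p k \<noteq> k"
      unfolding permutes_def by auto
    then have "unit_rows_on S A $ k $ p k = 0"
      by (simp add: unit_rows_on_def axis_def)
    then show "of_int (sign p) * (\<Prod>i\<in>UNIV. unit_rows_on S A $ i $ p i) = 0"
      by (metis UNIV_I finite mult_zero_right prod_zero)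
  qed
  fix p assume "p \<in> {p. p permutes -S}"
  then have "(\<Prod>i\<in>UNIV. unit_rows_on S A $ i $ p i) = (\<Prod>k\<in>-S. A$k$p k)"
    by (intro prod.mono_neutral_cong_right)
       (auto simp: permutes_not_in unit_rows_on_def axis_def)
  then show "of_int (sign p) * (\<Prod>i\<in>UNIV. unit_rows_on S A $ i $ p i)
      = of_int (sign p) * (\<Prod>k\<in>-S. A$k$p k)"
    by simp
qed

lemma det_unit_rows_on_Compl_singleton:
  fixes A :: "'a::comm_ring_1^'n^'n"
  shows "det (unit_rows_on (-{i}) A) = A$i$i"
  by (simp add: det_unit_rows_on)

lemma det_unit_rows_on_Compl_doubleton:
  fixes A :: "'a::comm_ring_1^'n^'n"
  assumes "i \<noteq> j"
  shows "det (unit_rows_on (-{i, j}) A) = A$i$i * A$j$j - A$i$j * A$j$i"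
proof -
  have "det (unit_rows_on (-{i, j}) A)
      = (\<Sum>p\<in>{p. p permutes insert i {j}}. of_int (sign p) * (\<Prod>k\<in>{i, j}. A$k$p k))"
    by (simp add: det_unit_rows_on)
  also have "\<dots> = (\<Sum>m\<in>{i, j}. of_int (sign (Transposition.transpose i m))
      * (\<Prod>k\<in>{i, j}. A$k$Transposition.transpose i m k))"
    by (subst sum_over_permutations_insert) (use assms in auto)
  also have "\<dots> = A$i$i * A$j$j - A$i$j * A$j$i"
    using assms by (simp add: sign_swap_id Transposition.transpose_def)
  finally show ?thesis .
qed

lemma det_row_add_scaled_axis:
  fixes A :: "'a::comm_ring_1^'n^'n"
  shows "det (\<chi> k. if k = i then A$i + t *s axis i 1 else A$k)
    = det A + t * det (unit_rows_on {i} A)"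
proof -
  have "det (\<chi> k. if k = i then A$i + t *s axis i 1 else A$k)
      = det (\<chi> k. if k = i then A$i else A$k)
        + t * det (\<chi> k. if k = i then axis i 1 else A$k)"
    by (simp only: det_row_add det_row_mul)
  also have "(\<chi> k. if k = i then A$i else A$k) = A"
    by (simp add: vec_eq_iff)
  also have "(\<chi> k. if k = i then axis i 1 else A$k) = unit_rows_on {i} A"
    by (simp add: vec_eq_iff unit_rows_on_def)
  finally show ?thesis .
qed

lemma det_unit_rows_on_add_diag_mat:
  fixes c :: "'a::comm_ring_1^'n^'n"
  assumes det_add_diag: "\<And>d. det (c + diag_mat d) = prod d UNIV"
  shows "det (unit_rows_on S (c + diag_mat d)) = (\<Prod>k\<in>-S. d k)"
proof (induction S arbitrary: d rule: finite_induct[OF finite])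
  case 1
  have "unit_rows_on {} A = A" for A :: "'a^'n^'n"
    by (simp add: unit_rows_on_def vec_lambda_eta)
  then show ?case
    using det_add_diag[of d] by (simp only: Compl_empty_eq)
next
  case (2 i S)
  let ?M = "\<lambda>d. unit_rows_on S (c + diag_mat d)"
  let ?N = "\<lambda>d. unit_rows_on (insert i S) (c + diag_mat d)"
  have expand: "det (?M e) = det (?M (e(i := 0))) + e i * det (?N e)" for e
  proof -
    have "?M e = (\<chi> k. if k = i then ?M (e(i := 0)) $ i + e i *s axis i 1
        else ?M (e(i := 0)) $ k)"
      using 2 by (auto simp: vec_eq_iff unit_rows_on_def diag_mat_def axis_def)
    moreover have "unit_rows_on {i} (?M (e(i := 0))) = ?N e"
      by (auto simp: vec_eq_iff unit_rows_on_def diag_mat_def)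
    ultimately show ?thesis
      by (simp add: det_row_add_scaled_axis)
  qed
  have split_prod: "(\<Prod>k\<in>-S. e k) = e i * (\<Prod>k\<in>-insert i S. e k)" for e :: "'n \<Rightarrow> 'a"
  proof -
    have "-S = insert i (-insert i S)"
      using 2 by auto
    then show ?thesis
      by simp
  qed
  text \<open>Putting \<open>e i = 0\<close> kills every principal minor through row \<open>i\<close>; evaluating at
    \<open>e i = 1\<close> then isolates the minor without row \<open>i\<close>.\<close>
  have "e i * det (?N e) = e i * (\<Prod>k\<in>-insert i S. e k)" for e
  proof -
    have "(\<Prod>k\<in>-S. (e(i := 0)) k) = 0"
      using 2 by (intro prod_zero) auto
    then have "e i * det (?N e) = (\<Prod>k\<in>-S. e k)"
      using expand[of e] "2.IH"[of e] "2.IH"[of "e(i := 0)"] by simp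
    then show ?thesis
      by (simp add: split_prod)
  qed
  moreover have "?N (d(i := 1)) = ?N d"
    by (auto simp: vec_eq_iff unit_rows_on_def diag_mat_def)
  moreover have "(\<Prod>k\<in>-insert i S. (d(i := 1)) k) = (\<Prod>k\<in>-insert i S. d k)"
    by (rule prod.cong) auto
  ultimately show ?case
    by (metis fun_upd_same mult_1)
qed

lemma symmetric_eq_0_if_det_add_diag_mat:
  fixes c :: "'a::idom^'n^'n"
  assumes sym: "transpose c = c"
    and det_add_diag: "\<And>d. det (c + diag_mat d) = prod d UNIV"
  shows "c = 0"
proof -
  have minor: "det (unit_rows_on S c) = 0" if "S \<noteq> UNIV" for S
  proof -
    have "det (unit_rows_on S (c + diag_mat (\<lambda>_. 0))) = (\<Prod>k\<in>-S. 0)"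
      by (rule det_unit_rows_on_add_diag_mat[OF det_add_diag])
    moreover have "c + diag_mat (\<lambda>_. 0) = c"
      by (simp add: diag_mat_def vec_eq_iff)
    moreover have "(\<Prod>k\<in>-S. 0) = (0::'a)"
      using that by (intro prod_zero) auto
    ultimately show ?thesis
      by simp
  qed
  have diag: "c$i$i = 0" for i
  proof -
    have "-{i} \<noteq> UNIV"
      by auto
    then show ?thesis
      using minor det_unit_rows_on_Compl_singleton by metis
  qed
  have "c$i$j = 0" if "i \<noteq> j" for i j
  proof -
    have "c$j$i = c$i$j"
      using sym by (metis transpose_def vec_lambda_beta)
    moreover have "det (unit_rows_on (-{i, j}) c) = 0"
      by (rule minor) auto
    ultimately have "c$i$j * c$i$j = 0"
      using diag by (simp add: det_unit_rows_on_Compl_doubleton[OF that])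
    then show ?thesis by simp
  qed
  with diag show ?thesis
    by (metis vec_eq_iff zero_index)
qed

theorem lemma2p1:
  fixes a b :: "'a::field ^ 'n ^ 'n"
  assumes char: "(2::'a) \<noteq> 0"
    and card: "infinite (UNIV :: 'a set) \<or> CARD('a) \<ge> CARD('n)^2 + 1"
    and sym_a: "transpose a = a"
    and sym_b: "transpose b = b"
    and dets: "\<forall>x :: 'a ^ 'n ^ 'n. transpose x = x \<longrightarrow> det (a + x) = det (b + x)"
  shows "a = b"
proof -
  have "det ((b - a) + diag_mat d) = prod d UNIV" for d
  proof -
    have "transpose (diag_mat d - a) = diag_mat d - a"
      using sym_a by (simp add: vec_eq_iff transpose_def diag_mat_def)
    then have "det (a + (diag_mat d - a)) = det (b + (diag_mat d - a))"
      using dets by blast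
    then show ?thesis
      by (simp add: algebra_simps)
  qed
  moreover have "transpose (b - a) = b - a"
    using sym_a sym_b by (simp add: vec_eq_iff transpose_def)
  ultimately have "b - a = 0"
    by (intro symmetric_eq_0_if_det_add_diag_mat)
  then show ?thesis by simp
qed

end
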